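(* Let $(K,\mathscr T)$ be a stable topological space and $f:K\to L^0$ a stable lower semi-continuous function. If $K$ is stable compact, then there exists $x_0\in K$ such that $f(x_0)=\min_{x\in K}f(x)$, i.e. $f(x_0)\le f(x)$ for all $x\in K$.
   Context: $L^0$: real measurable functions on a probability space modulo a.e. equality, a.e. order; $\bar L^0$ the corresponding extended-real-valued classes. An $L^0$-module $E$ is stable if for every countable measurable partition $(A_k)$ and $(x_k)\subset E$ there is a unique $x=\sum_k1_{A_k}x_k$ with $1_{A_k}x=1_{A_k}x_k$. A nonempty subset is stable if closed under concatenations; for stable $Y_k$, $\sum_k1_{A_k}Y_k=\{\sum_k1_{A_k}y_k:y_k\in Y_k\}$; a nonempty collection of stable sets is stable if closed under this operation. A stable topological space is a stable subset $K$ of a stable $L^0$-module with a topology having a base which is a stable collection of stable sets. $f$ is stable if $f(\sum_k1_{A_k}x_k)=\sum_k1_{A_k}f(x_k)$; lower semi-continuous if $\{x\in K:f(x)\le\eta\}$ is closed for every $\eta\in\bar L^0$. A filter is stable if it has a filter base which is a stable collection of stable sets; $K$ is stable compact if every stable filter on $K$ has a cluster point in $K$. *)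

theory Defs
  imports "HOL-Probability.Probability"
begin

text \<open>Elements of L0 are represented by real-valued measurable functions on the
probability space M; equalities and inequalities between them are read almost everywhere.\<close>

definition meas_partition :: "'w measure \<Rightarrow> (nat \<Rightarrow> 'w set) \<Rightarrow> bool" where
  "meas_partition M A \<longleftrightarrow>
     (\<forall>k. A k \<in> sets M) \<and> disjoint_family A \<and> (\<Union>k. A k) = space M"

definition L0_module :: "'w measure \<Rightarrow> 'e::ab_group_add set \<Rightarrow> (('w \<Rightarrow> real) \<Rightarrow> 'e \<Rightarrow> 'e) \<Rightarrow> bool" where
  "L0_module M E sm \<longleftrightarrow>
     0 \<in> E \<and> (\<forall>x\<in>E. \<forall>y\<in>E. x + y \<in> E \<and> - x \<in> E) \<and>
     (\<forall>f\<in>borel_measurable M. \<forall>x\<in>E. sm f x \<in> E) \<and>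
     (\<forall>f\<in>borel_measurable M. \<forall>g\<in>borel_measurable M. \<forall>x\<in>E.
        sm (\<lambda>w. f w + g w) x = sm f x + sm g x \<and> sm (\<lambda>w. f w * g w) x = sm f (sm g x)) \<and>
     (\<forall>f\<in>borel_measurable M. \<forall>x\<in>E. \<forall>y\<in>E. sm f (x + y) = sm f x + sm f y) \<and>
     (\<forall>x\<in>E. sm (\<lambda>w. 1) x = x) \<and>
     (\<forall>f\<in>borel_measurable M. \<forall>g\<in>borel_measurable M.
        (AE w in M. f w = g w) \<longrightarrow> (\<forall>x\<in>E. sm f x = sm g x))"

definition stable_module :: "'w measure \<Rightarrow> 'e::ab_group_add set \<Rightarrow> (('w \<Rightarrow> real) \<Rightarrow> 'e \<Rightarrow> 'e) \<Rightarrow> bool" where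
  "stable_module M E sm \<longleftrightarrow> L0_module M E sm \<and>
     (\<forall>A xs. meas_partition M A \<and> (\<forall>k. xs k \<in> E) \<longrightarrow>
        (\<exists>!x. x \<in> E \<and> (\<forall>k. sm (indicator (A k)) x = sm (indicator (A k)) (xs k))))"

text \<open>The concatenation sum_k 1_{A_k} x_k.\<close>
definition conc :: "'w measure \<Rightarrow> 'e::ab_group_add set \<Rightarrow> (('w \<Rightarrow> real) \<Rightarrow> 'e \<Rightarrow> 'e)
    \<Rightarrow> (nat \<Rightarrow> 'w set) \<Rightarrow> (nat \<Rightarrow> 'e) \<Rightarrow> 'e" where
  "conc M E sm A xs = (THE x. x \<in> E \<and> (\<forall>k. sm (indicator (A k)) x = sm (indicator (A k)) (xs k)))"

definition stable_set :: "'w measure \<Rightarrow> 'e::ab_group_add set \<Rightarrow> (('w \<Rightarrow> real) \<Rightarrow> 'e \<Rightarrow> 'e) \<Rightarrow> 'e set \<Rightarrow> bool" where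
  "stable_set M E sm S \<longleftrightarrow> S \<noteq> {} \<and> S \<subseteq> E \<and>
     (\<forall>A xs. meas_partition M A \<and> (\<forall>k. xs k \<in> S) \<longrightarrow> conc M E sm A xs \<in> S)"

definition stable_coll :: "'w measure \<Rightarrow> 'e::ab_group_add set \<Rightarrow> (('w \<Rightarrow> real) \<Rightarrow> 'e \<Rightarrow> 'e) \<Rightarrow> 'e set set \<Rightarrow> bool" where
  "stable_coll M E sm C \<longleftrightarrow> C \<noteq> {} \<and> (\<forall>S\<in>C. stable_set M E sm S) \<and>
     (\<forall>A Y. meas_partition M A \<and> (\<forall>k. Y k \<in> C) \<longrightarrow>
        {conc M E sm A ys | ys. \<forall>k. ys k \<in> Y k} \<in> C)"

definition stable_top_space :: "'w measure \<Rightarrow> 'e::ab_group_add set \<Rightarrow> (('w \<Rightarrow> real) \<Rightarrow> 'e \<Rightarrow> 'e)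
    \<Rightarrow> 'e set \<Rightarrow> 'e topology \<Rightarrow> bool" where
  "stable_top_space M E sm K T \<longleftrightarrow> stable_module M E sm \<and> stable_set M E sm K \<and> topspace T = K \<and>
     (\<exists>B. stable_coll M E sm B \<and> (\<forall>U\<in>B. openin T U) \<and>
          (\<forall>U. openin T U \<longrightarrow> (\<exists>B'. B' \<subseteq> B \<and> \<Union>B' = U)))"

definition stable_filter :: "'w measure \<Rightarrow> 'e::ab_group_add set \<Rightarrow> (('w \<Rightarrow> real) \<Rightarrow> 'e \<Rightarrow> 'e)
    \<Rightarrow> 'e set \<Rightarrow> 'e filter \<Rightarrow> bool" where
  "stable_filter M E sm K F \<longleftrightarrow> eventually (\<lambda>x. x \<in> K) F \<and>
     (\<exists>B. stable_coll M E sm B \<and> (\<forall>b\<in>B. eventually (\<lambda>x. x \<in> b) F) \<and>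
          (\<forall>U. eventually (\<lambda>x. x \<in> U) F \<longrightarrow> (\<exists>b\<in>B. b \<subseteq> U)))"

definition cluster_pt :: "'e topology \<Rightarrow> 'e filter \<Rightarrow> 'e \<Rightarrow> bool" where
  "cluster_pt T F x \<longleftrightarrow> x \<in> topspace T \<and>
     (\<forall>U A. openin T U \<and> x \<in> U \<and> eventually (\<lambda>y. y \<in> A) F \<longrightarrow> U \<inter> A \<noteq> {})"

definition stable_compact :: "'w measure \<Rightarrow> 'e::ab_group_add set \<Rightarrow> (('w \<Rightarrow> real) \<Rightarrow> 'e \<Rightarrow> 'e)
    \<Rightarrow> 'e set \<Rightarrow> 'e topology \<Rightarrow> bool" where
  "stable_compact M E sm K T \<longleftrightarrow>
     (\<forall>F. stable_filter M E sm K F \<longrightarrow> (\<exists>x\<in>K. cluster_pt T F x))"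

text \<open>Stability of f : K \<rightarrow> L0: f(sum 1_{A_k} x_k) = sum 1_{A_k} f(x_k), i.e.
1_{A_k} f(x) = 1_{A_k} f(x_k) a.e. for every k.\<close>
definition stable_fun :: "'w measure \<Rightarrow> 'e::ab_group_add set \<Rightarrow> (('w \<Rightarrow> real) \<Rightarrow> 'e \<Rightarrow> 'e)
    \<Rightarrow> 'e set \<Rightarrow> ('e \<Rightarrow> 'w \<Rightarrow> real) \<Rightarrow> bool" where
  "stable_fun M E sm K f \<longleftrightarrow>
     (\<forall>A xs. meas_partition M A \<and> (\<forall>k. xs k \<in> K) \<longrightarrow>
        (\<forall>k. AE w in M. w \<in> A k \<longrightarrow> f (conc M E sm A xs) w = f (xs k) w))"

definition lsc_L0 :: "'w measure \<Rightarrow> 'e set \<Rightarrow> 'e topology \<Rightarrow> ('e \<Rightarrow> 'w \<Rightarrow> real) \<Rightarrow> bool" where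
  "lsc_L0 M K T f \<longleftrightarrow>
     (\<forall>\<eta> :: 'w \<Rightarrow> ereal. \<eta> \<in> borel_measurable M \<longrightarrow>
        closedin T {x \<in> K. AE w in M. ereal (f x w) \<le> \<eta> w})"

end

theory Submission
  imports Defs
begin

text \<open>The sublevel sets S y = {x \<in> K. f x \<le> f y} form a stable collection which is
downward directed, because stability lets one glue y and y' into a point z with
f z = min (f y) (f y'). So they are a base of a stable filter, which has a cluster
point x0 by stable compactness. Each S y is closed by lower semi-continuity, so x0
lies in every S y, i.e. f x0 \<le> f y for all y \<in> K.\<close>

lemma restrict_conc:
  assumes "stable_module M E sm" "meas_partition M A" "\<forall>k. xs k \<in> E"
  shows "sm (indicator (A k)) (conc M E sm A xs) = sm (indicator (A k)) (xs k)"
proof -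
  from assms have "\<exists>!x. x \<in> E \<and> (\<forall>k. sm (indicator (A k)) x = sm (indicator (A k)) (xs k))"
    unfolding stable_module_def by blast
  from theI'[OF this] show ?thesis
    unfolding conc_def by auto
qed

lemma conc_unique:
  assumes "stable_module M E sm" "meas_partition M A" "\<forall>k. xs k \<in> E" "x \<in> E"
    and "\<forall>k. sm (indicator (A k)) x = sm (indicator (A k)) (xs k)"
  shows "conc M E sm A xs = x"
proof -
  from assms have "\<exists>!x. x \<in> E \<and> (\<forall>k. sm (indicator (A k)) x = sm (indicator (A k)) (xs k))"
    unfolding stable_module_def by blast
  then show ?thesis
    unfolding conc_def by (rule the1_equality) (use assms in auto)
qed

definition binary_partition :: "'w measure \<Rightarrow> 'w set \<Rightarrow> nat \<Rightarrow> 'w set" where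
  "binary_partition M C k = (if k = 0 then C else if k = 1 then space M - C else {})"

lemma binary_partition_0 [simp]: "binary_partition M C 0 = C"
  and binary_partition_1 [simp]: "binary_partition M C (Suc 0) = space M - C"
  by (simp_all add: binary_partition_def)

lemma meas_partition_binary_partition:
  assumes "C \<in> sets M"
  shows "meas_partition M (binary_partition M C)"
proof -
  have "C \<subseteq> space M"
    using assms sets.sets_into_space by auto
  then have "(\<Union>k. binary_partition M C k) = space M"
    by (auto simp: binary_partition_def intro: exI[of _ 0] exI[of _ 1])
  moreover have "disjoint_family (binary_partition M C)"
    by (auto simp: disjoint_family_on_def binary_partition_def)
  ultimately show ?thesis
    using assms by (auto simp: meas_partition_def binary_partition_def)
qed

lemma cluster_pt_in_closedin:
  assumes "cluster_pt T F x" "closedin T C" "eventually (\<lambda>y. y \<in> C) F"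
  shows "x \<in> C"
proof (rule ccontr)
  assume "x \<notin> C"
  then have "openin T (topspace T - C)" "x \<in> topspace T - C"
    using assms(1,2) by (auto simp: closedin_def cluster_pt_def)
  then have "(topspace T - C) \<inter> C \<noteq> {}"
    using assms(1,3) unfolding cluster_pt_def by blast
  then show False by auto
qed

locale stable_L0_function =
  fixes M :: "'w measure" and E :: "'e::ab_group_add set"
    and sm :: "('w \<Rightarrow> real) \<Rightarrow> 'e \<Rightarrow> 'e"
    and K :: "'e set" and f :: "'e \<Rightarrow> 'w \<Rightarrow> real"
  assumes stable_module: "stable_module M E sm"
    and stable_K: "stable_set M E sm K"
    and measurable_f: "\<And>x. x \<in> K \<Longrightarrow> f x \<in> borel_measurable M"
    and stable_f: "stable_fun M E sm K f"
begin

lemma K_subset: "K \<subseteq> E" and K_nonempty: "K \<noteq> {}"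
  using stable_K by (auto simp: stable_set_def)

lemma conc_in_K: "meas_partition M A \<Longrightarrow> \<forall>k. xs k \<in> K \<Longrightarrow> conc M E sm A xs \<in> K"
  using stable_K by (auto simp: stable_set_def)

lemma AE_f_conc:
  "meas_partition M A \<Longrightarrow> \<forall>k. xs k \<in> K \<Longrightarrow>
    AE w in M. w \<in> A k \<longrightarrow> f (conc M E sm A xs) w = f (xs k) w"
  using stable_f by (auto simp: stable_fun_def)

lemma AE_f_conc_le_conc:
  assumes A: "meas_partition M A" and xs: "\<forall>k. xs k \<in> K" and ys: "\<forall>k. ys k \<in> K"
    and le: "\<And>k. AE w in M. w \<in> A k \<longrightarrow> f (xs k) w \<le> f (ys k) w"
  shows "AE w in M. f (conc M E sm A xs) w \<le> f (conc M E sm A ys) w"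
proof -
  have "AE w in M. w \<in> A k \<longrightarrow> f (conc M E sm A xs) w \<le> f (conc M E sm A ys) w" for k
    using AE_f_conc[OF A xs, of k] AE_f_conc[OF A ys, of k] le[of k]
    by eventually_elim auto
  then have AE_pieces: "AE w in M. \<forall>k. w \<in> A k \<longrightarrow> f (conc M E sm A xs) w \<le> f (conc M E sm A ys) w"
    unfolding AE_all_countable by blast
  have cover: "\<forall>w\<in>space M. \<exists>k. w \<in> A k"
    using A unfolding meas_partition_def by blast
  show ?thesis
    using AE_pieces AE_space by eventually_elim (use cover in blast)
qed

definition glue :: "'w set \<Rightarrow> 'e \<Rightarrow> 'e \<Rightarrow> 'e" where
  "glue C x y = conc M E sm (binary_partition M C) (\<lambda>j. if j = 0 then x else y)"

context
  fixes C x y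
  assumes C: "C \<in> sets M" and x: "x \<in> K" and y: "y \<in> K"
begin

private lemma glue_pieces_in_K: "\<forall>j. (if j = 0 then x else y) \<in> K"
  using x y by simp

lemma glue_in_K: "glue C x y \<in> K"
  unfolding glue_def
  by (rule conc_in_K[OF meas_partition_binary_partition[OF C] glue_pieces_in_K])

lemma AE_f_glue_inside: "AE w in M. w \<in> C \<longrightarrow> f (glue C x y) w = f x w"
  using AE_f_conc[OF meas_partition_binary_partition[OF C] glue_pieces_in_K, of 0]
  by (simp add: glue_def)

lemma AE_f_glue_outside: "AE w in M. w \<notin> C \<longrightarrow> f (glue C x y) w = f y w"
  using AE_f_conc[OF meas_partition_binary_partition[OF C] glue_pieces_in_K, of 1] AE_space
  by eventually_elim (simp add: glue_def)

lemma restrict_glue: "sm (indicator C) (glue C x y) = sm (indicator C) x"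
proof -
  have "\<forall>j. (if j = 0 then x else y) \<in> E"
    using glue_pieces_in_K K_subset by blast
  from restrict_conc[OF stable_module meas_partition_binary_partition[OF C] this, of 0]
  show ?thesis
    by (simp add: glue_def)
qed

end

definition sublevel :: "'e \<Rightarrow> 'e set" where
  "sublevel y = {x \<in> K. AE w in M. f x w \<le> f y w}"

lemma sublevel_subset: "sublevel y \<subseteq> K"
  by (auto simp: sublevel_def)

lemma self_in_sublevel: "y \<in> K \<Longrightarrow> y \<in> sublevel y"
  by (simp add: sublevel_def)

lemma sublevel_trans: "x \<in> sublevel y \<Longrightarrow> AE w in M. f y w \<le> f z w \<Longrightarrow> x \<in> sublevel z"
  unfolding sublevel_def by (auto elim: AE_mp intro: order_trans)

lemma closedin_sublevel:
  assumes "lsc_L0 M K T f" and y: "y \<in> K"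
  shows "closedin T (sublevel y)"
proof -
  have "(\<lambda>w. ereal (f y w)) \<in> borel_measurable M"
    using measurable_f[OF y] by measurable
  then have "closedin T {x \<in> K. AE w in M. ereal (f x w) \<le> ereal (f y w)}"
    using assms(1) unfolding lsc_L0_def by blast
  then show ?thesis
    by (simp add: sublevel_def)
qed

lemma stable_set_sublevel:
  assumes y: "y \<in> K"
  shows "stable_set M E sm (sublevel y)"
proof -
  have "conc M E sm A xs \<in> sublevel y"
    if A: "meas_partition M A" and xs: "\<forall>k. xs k \<in> sublevel y" for A xs
  proof -
    have xs_K: "\<forall>k. xs k \<in> K"
      using xs sublevel_subset by auto
    have "AE w in M. f (conc M E sm A xs) w \<le> f (conc M E sm A (\<lambda>_. y)) w"
      by (rule AE_f_conc_le_conc[OF A xs_K]) (use y xs in \<open>auto simp: sublevel_def elim: AE_mp\<close>)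
    moreover have "conc M E sm A (\<lambda>_. y) = y"
      by (rule conc_unique[OF stable_module A]) (use y K_subset in auto)
    ultimately show ?thesis
      using conc_in_K[OF A xs_K] by (simp add: sublevel_def)
  qed
  then show ?thesis
    using self_in_sublevel[OF y] sublevel_subset K_subset unfolding stable_set_def by blast
qed

text \<open>For the inclusion from right to left, x is recovered as the concatenation of the
points glue (A k) x (ys k), which lie in sublevel (ys k).\<close>

lemma conc_sublevels:
  assumes A: "meas_partition M A" and ys: "\<forall>k. ys k \<in> K"
  shows "{conc M E sm A xs | xs. \<forall>k. xs k \<in> sublevel (ys k)} = sublevel (conc M E sm A ys)"
proof (intro equalityI subsetI)
  fix z assume "z \<in> {conc M E sm A xs | xs. \<forall>k. xs k \<in> sublevel (ys k)}"
  then obtain xs where z: "z = conc M E sm A xs" and xs: "\<forall>k. xs k \<in> sublevel (ys k)"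
    by blast
  have xs_K: "\<forall>k. xs k \<in> K"
    using xs sublevel_subset by blast
  have "AE w in M. f z w \<le> f (conc M E sm A ys) w"
    unfolding z
    by (rule AE_f_conc_le_conc[OF A xs_K ys]) (use xs in \<open>auto simp: sublevel_def elim: AE_mp\<close>)
  then show "z \<in> sublevel (conc M E sm A ys)"
    using conc_in_K[OF A xs_K] by (simp add: z sublevel_def)
next
  fix x assume x: "x \<in> sublevel (conc M E sm A ys)"
  have x_K: "x \<in> K"
    using x sublevel_subset by blast
  have A_sets: "A k \<in> sets M" for k
    using A by (simp add: meas_partition_def)
  define xs where "xs k = glue (A k) x (ys k)" for k
  have xs_K: "xs k \<in> K" for k
    unfolding xs_def using glue_in_K[OF A_sets x_K] ys by blast
  have x_le: "AE w in M. f x w \<le> f (conc M E sm A ys) w"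
    using x by (simp add: sublevel_def)
  have "xs k \<in> sublevel (ys k)" for k
  proof -
    have "AE w in M. f (xs k) w \<le> f (ys k) w"
      using AE_f_glue_inside[OF A_sets x_K ys[THEN spec, of k]]
        AE_f_glue_outside[OF A_sets x_K ys[THEN spec, of k]] AE_f_conc[OF A ys, of k] x_le
      unfolding xs_def by eventually_elim auto
    then show ?thesis
      using xs_K by (simp add: sublevel_def)
  qed
  moreover have "conc M E sm A xs = x"
    by (rule conc_unique[OF stable_module A])
      (use xs_K x_K K_subset ys in \<open>auto simp: xs_def restrict_glue[OF A_sets x_K]\<close>)
  ultimately show "x \<in> {conc M E sm A xs | xs. \<forall>k. xs k \<in> sublevel (ys k)}"
    by blast
qed

lemma stable_coll_sublevels: "stable_coll M E sm (sublevel ` K)"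
proof -
  have "{conc M E sm A xs | xs. \<forall>k. xs k \<in> Y k} \<in> sublevel ` K"
    if A: "meas_partition M A" and Y: "\<forall>k. Y k \<in> sublevel ` K" for A Y
  proof -
    from Y have "\<forall>k. \<exists>y\<in>K. Y k = sublevel y"
      by blast
    then obtain ys where ys: "\<forall>k. ys k \<in> K" and Y_eq: "\<forall>k. Y k = sublevel (ys k)"
      by metis
    show ?thesis
      using conc_sublevels[OF A ys] conc_in_K[OF A ys] by (simp add: Y_eq)
  qed
  moreover have "\<forall>S\<in>sublevel ` K. stable_set M E sm S"
    using stable_set_sublevel by blast
  ultimately show ?thesis
    using K_nonempty unfolding stable_coll_def by blast
qed

lemma sublevels_directed:
  assumes y: "y \<in> K" and y': "y' \<in> K"
  shows "\<exists>z\<in>K. sublevel z \<subseteq> sublevel y \<inter> sublevel y'"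
proof -
  define C where "C = {w \<in> space M. f y w \<le> f y' w}"
  have C: "C \<in> sets M"
    unfolding C_def using measurable_f[OF y] measurable_f[OF y'] by measurable
  define z where "z = glue C y y'"
  have "AE w in M. f z w \<le> f y w"
    using AE_f_glue_inside[OF C y y'] AE_f_glue_outside[OF C y y'] AE_space
    by eventually_elim (auto simp: z_def C_def)
  moreover have "AE w in M. f z w \<le> f y' w"
    using AE_f_glue_inside[OF C y y'] AE_f_glue_outside[OF C y y'] AE_space
    by eventually_elim (auto simp: z_def C_def)
  ultimately have "sublevel z \<subseteq> sublevel y \<inter> sublevel y'"
    using sublevel_trans by blast
  then show ?thesis
    using glue_in_K[OF C y y'] z_def by blast
qed

definition sublevel_filter :: "'e filter" where
  "sublevel_filter = (INF y\<in>K. principal (sublevel y))"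

lemma eventually_sublevel_filter:
  "eventually P sublevel_filter \<longleftrightarrow> (\<exists>y\<in>K. \<forall>x\<in>sublevel y. P x)"
proof -
  have "eventually P sublevel_filter \<longleftrightarrow> (\<exists>y\<in>K. eventually P (principal (sublevel y)))"
    unfolding sublevel_filter_def
    by (rule eventually_INF_base) (use K_nonempty sublevels_directed in \<open>auto simp: inf_principal\<close>)
  then show ?thesis
    by (simp add: eventually_principal)
qed

lemma stable_filter_sublevel_filter: "stable_filter M E sm K sublevel_filter"
  unfolding stable_filter_def
proof (intro conjI exI[of _ "sublevel ` K"])
  show "eventually (\<lambda>x. x \<in> K) sublevel_filter"
    using K_nonempty sublevel_subset by (force simp: eventually_sublevel_filter)
  show "stable_coll M E sm (sublevel ` K)"
    by (rule stable_coll_sublevels)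
  show "\<forall>b\<in>sublevel ` K. eventually (\<lambda>x. x \<in> b) sublevel_filter"
    by (auto simp: eventually_sublevel_filter)
  show "\<forall>U. eventually (\<lambda>x. x \<in> U) sublevel_filter \<longrightarrow> (\<exists>b\<in>sublevel ` K. b \<subseteq> U)"
    by (auto simp: eventually_sublevel_filter)
qed

end

theorem theorem5:
  fixes M :: "'w measure" and E :: "'e::ab_group_add set"
    and sm :: "('w \<Rightarrow> real) \<Rightarrow> 'e \<Rightarrow> 'e"
    and K :: "'e set" and T :: "'e topology" and f :: "'e \<Rightarrow> 'w \<Rightarrow> real"
  assumes "prob_space M"
    and "stable_top_space M E sm K T"
    and "\<forall>x\<in>K. f x \<in> borel_measurable M"
    and "stable_fun M E sm K f"
    and "lsc_L0 M K T f"
    and "stable_compact M E sm K T"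
  shows "\<exists>x0\<in>K. \<forall>x\<in>K. AE w in M. f x0 w \<le> f x w"
proof -
  interpret stable_L0_function M E sm K f
    using assms(2-4) by unfold_locales (auto simp: stable_top_space_def)
  obtain x0 where x0: "x0 \<in> K" and cluster: "cluster_pt T sublevel_filter x0"
    using assms(6) stable_filter_sublevel_filter by (auto simp: stable_compact_def)
  have "x0 \<in> sublevel y" if y: "y \<in> K" for y
    using cluster_pt_in_closedin[OF cluster closedin_sublevel[OF assms(5) y]] y
    unfolding eventually_sublevel_filter by blast
  then show ?thesis
    using x0 by (auto simp: sublevel_def)
qed

end
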